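(* Let $p\ge q\ge 1$, real $c_{q+1},\dots,c_p$ (with $c_j=0$ for $j>p$), and \[ r(x) = 1 + \sum_{j=1}^{q}\frac{1}{j!}(-\mathrm{i}x)^j + \sum_{j=q+1}^{p} c_j(-\mathrm{i}x)^j . \] Define $S=(-1)^{q/2}\Big[\big(c_{q+1}-\tfrac{1}{(q+1)!}\big)-\big(c_{q+2}-\tfrac{1}{(q+2)!}\big)\Big]$ if $q$ is even and $S=(-1)^{(q+1)/2}\big(c_{q+1}-\tfrac{1}{(q+1)!}\big)$ if $q$ is odd. If $S<0$, then there exists $\eta_s>0$ such that $|r(x)|<1$ for all real $x$ with $0<x<\pi\eta_s$. If $S>0$, then there exists $\varepsilon>0$ such that $|r(x)|>1$ for all real $x$ with $0<x<\varepsilon$ (i.e. the scheme is unstable for arbitrarily small real $x$). *)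

theory Defs
  imports Complex_Main
begin

definition ceff :: "(nat \<Rightarrow> real) \<Rightarrow> nat \<Rightarrow> nat \<Rightarrow> real" where
  "ceff c p j = (if j \<le> p then c j else 0)"

definition rfun :: "(nat \<Rightarrow> real) \<Rightarrow> nat \<Rightarrow> nat \<Rightarrow> real \<Rightarrow> complex" where
  "rfun c p q x = 1 + (\<Sum>j=1..q. (- \<i> * complex_of_real x) ^ j / of_real (fact j))
                     + (\<Sum>j=q+1..p. complex_of_real (c j) * (- \<i> * complex_of_real x) ^ j)"

definition Sval :: "(nat \<Rightarrow> real) \<Rightarrow> nat \<Rightarrow> nat \<Rightarrow> real" where
  "Sval c p q =
     (if even q then
        (-1) ^ (q div 2) * ((ceff c p (q+1) - 1 / fact (q+1)) - (ceff c p (q+2) - 1 / fact (q+2)))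
      else (-1) ^ ((q+1) div 2) * (ceff c p (q+1) - 1 / fact (q+1)))"

end

theory Submission
  imports Defs "HOL-Analysis.Complex_Transcendental" "HOL-Library.Landau_Symbols"
begin

(* Write r(x) = R(-ix) with R(z) = 1 + sum_{j=1..q} z^j/j! + sum_{j=q+1..p} c_j z^j, and let
   e_j = c_j - 1/j! be the error constants. Comparing R with the Taylor polynomial of exp gives
   exp(-z) R(z) = 1 + e_{q+1} z^(q+1) + (e_{q+2} - e_{q+1}) z^(q+2) + O(z^(q+3)) as z -> 0.
   On the imaginary axis |exp(-z)| = 1, so |r(x)|^2 = |1 + Phi|^2 = 1 + 2 Re Phi + |Phi|^2 with
   Phi = O(x^(q+1)). Since (-i)^k is imaginary for odd k, exactly one of the two leading terms is
   real, and its real part is S x^m with m = q+2 for even q and m = q+1 for odd q. Hence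
   |r(x)|^2 - 1 ~ 2 S x^m as x -> 0+, so near 0 the sign of |r(x)| - 1 is the sign of S. *)

lemma eventually_norm_less_1_at_0: "eventually (\<lambda>z::'a::real_normed_vector. norm z < 1) (at 0)"
  using order_tendstoD(2)[OF tendsto_norm_zero[OF tendsto_ident_at], of 1] by simp

lemma power_bigo_power_at_0:
  fixes m n :: nat
  assumes "m \<le> n"
  shows "(\<lambda>z::'a::real_normed_field. z ^ n) \<in> O[at 0](\<lambda>z. z ^ m)"
  by (rule bigoI[of _ 1], rule eventually_mono[OF eventually_norm_less_1_at_0])
     (simp add: norm_power power_decreasing assms)

lemma power_smallo_power_at_0:
  fixes m n :: nat
  assumes "m < n"
  shows "(\<lambda>z::'a::real_normed_field. z ^ n) \<in> o[at 0](\<lambda>z. z ^ m)"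
proof (rule smalloI_tendsto)
  have "((\<lambda>z::'a. z ^ (n - m)) \<longlongrightarrow> 0) (at 0)"
    using tendsto_power[OF tendsto_ident_at[of "0::'a" UNIV], of "n - m"] assms
    by (simp add: power_0_left)
  moreover have "eventually (\<lambda>z::'a. z ^ (n - m) = z ^ n / z ^ m) (at 0)"
    using eventually_neq_at_within[of 0 0 UNIV]
    by eventually_elim (simp add: power_diff assms less_imp_le)
  ultimately show "((\<lambda>z::'a. z ^ n / z ^ m) \<longlongrightarrow> 0) (at 0)"
    using assms by (simp add: tendsto_cong)
  show "eventually (\<lambda>z::'a. z ^ m \<noteq> 0) (at 0)"
    using eventually_neq_at_within[of 0 0 UNIV] by eventually_elim simp
qed

lemma norm_exp_taylor_remainder_le:
  fixes z :: complex
  assumes "norm z \<le> 1"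
  shows "norm (exp z - (\<Sum>j\<le>n. z ^ j / fact j)) \<le> exp 1 * norm z ^ Suc n"
proof -
  have "norm (exp z - (\<Sum>j\<le>n. z ^ j / fact j)) \<le> exp \<bar>Re z\<bar> * norm z ^ Suc n / fact n"
    by (rule Taylor_exp)
  also have "\<dots> \<le> exp \<bar>Re z\<bar> * norm z ^ Suc n"
    using divide_left_mono[of 1 "fact n" "exp \<bar>Re z\<bar> * norm z ^ Suc n"] by simp
  also have "\<dots> \<le> exp 1 * norm z ^ Suc n"
    using assms abs_Re_le_cmod[of z] by (intro mult_right_mono) simp_all
  finally show ?thesis .
qed

lemma exp_minus_taylor_bigo:
  "(\<lambda>z. exp z - (\<Sum>j\<le>n. z ^ j / fact j)) \<in> O[at (0::complex)](\<lambda>z. z ^ Suc n)"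
  by (rule bigoI[of _ "exp 1"], rule eventually_mono[OF eventually_norm_less_1_at_0])
     (simp add: norm_exp_taylor_remainder_le norm_power del: power_Suc)

definition stab_poly :: "(nat \<Rightarrow> real) \<Rightarrow> nat \<Rightarrow> nat \<Rightarrow> complex \<Rightarrow> complex" where
  "stab_poly c p q z = 1 + (\<Sum>j=1..q. z ^ j / of_real (fact j)) + (\<Sum>j=q+1..p. of_real (c j) * z ^ j)"

definition error_const :: "(nat \<Rightarrow> real) \<Rightarrow> nat \<Rightarrow> nat \<Rightarrow> real" where
  "error_const c p j = ceff c p j - 1 / fact j"

lemma rfun_eq_stab_poly: "rfun c p q x = stab_poly c p q (- \<i> * of_real x)"
  by (simp add: rfun_def stab_poly_def)

(* The sum runs up to p+2 so that e_{q+1} and e_{q+2} occur even when p < q+2 (then c_j = 0). *)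
lemma stab_poly_minus_exp:
  assumes "q \<le> p"
  shows "stab_poly c p q z - exp z = (\<Sum>j=q+1..p+2. of_real (error_const c p j) * z ^ j)
           - (exp z - (\<Sum>j\<le>p+2. z ^ j / fact j))"
proof -
  have taylor_split: "(\<Sum>j\<le>p+2. z ^ j / fact j)
      = (\<Sum>j\<le>q. z ^ j / fact j) + (\<Sum>j=q+1..p+2. z ^ j / fact j)"
    using sum_up_index_split[of "\<lambda>j. z ^ j / fact j" q "p + 2 - q"] assms by simp
  have low: "(\<Sum>j\<le>q. z ^ j / fact j) = 1 + (\<Sum>j=1..q. z ^ j / of_real (fact j))"
    using sum.atLeast_Suc_atMost[of 0 q "\<lambda>j. z ^ j / fact j"] by (simp add: atMost_atLeast0)
  have high:
    "(\<Sum>j=q+1..p+2. of_real (ceff c p j) * z ^ j) = (\<Sum>j=q+1..p. of_real (c j) * z ^ j)"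
  proof -
    have "(\<Sum>j=q+1..p+2. of_real (ceff c p j) * z ^ j)
        = (\<Sum>j=q+1..p. of_real (ceff c p j) * z ^ j) + (\<Sum>j=p+1..p+2. of_real (ceff c p j) * z ^ j)"
      by (rule sum.ub_add_nat) (use assms in simp)
    also have "\<dots> = (\<Sum>j=q+1..p. of_real (c j) * z ^ j)"
      by (simp add: ceff_def)
    finally show ?thesis .
  qed
  show ?thesis
    unfolding stab_poly_def error_const_def taylor_split low high[symmetric]
    by (simp add: sum_subtractf algebra_simps)
qed

lemma stab_poly_minus_exp_bigo:
  fixes c :: "nat \<Rightarrow> real"
  assumes "q \<le> p"
  defines "e \<equiv> \<lambda>j. complex_of_real (error_const c p j)"
  shows "(\<lambda>z. stab_poly c p q z - exp z - (e (q+1) * z ^ (q+1) + e (q+2) * z ^ (q+2)))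
           \<in> O[at 0](\<lambda>z. z ^ (q+3))"
proof -
  have split: "(\<Sum>j=q+1..p+2. e j * z ^ j)
      = e (q+1) * z ^ (q+1) + e (q+2) * z ^ (q+2) + (\<Sum>j=q+3..p+2. e j * z ^ j)" for z
    using assms(1) sum.atLeast_Suc_atMost[of "q+1" "p+2" "\<lambda>j. e j * z ^ j"]
      sum.atLeast_Suc_atMost[of "q+2" "p+2" "\<lambda>j. e j * z ^ j"]
    by (simp add: numeral_eq_Suc)
  have "(\<lambda>z. \<Sum>j=q+3..p+2. e j * z ^ j) \<in> O[at 0](\<lambda>z. z ^ (q+3))"
    by (intro big_sum_in_bigo) (auto intro: power_bigo_power_at_0)
  moreover have
    "(\<lambda>z. exp z - (\<Sum>j\<le>p+2. z ^ j / fact j)) \<in> O[at (0::complex)](\<lambda>z. z ^ (q+3))"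
    by (rule landau_o.big_trans[OF exp_minus_taylor_bigo power_bigo_power_at_0]) (use assms in simp)
  moreover have "stab_poly c p q z - exp z - (e (q+1) * z ^ (q+1) + e (q+2) * z ^ (q+2))
      = (\<Sum>j=q+3..p+2. e j * z ^ j) - (exp z - (\<Sum>j\<le>p+2. z ^ j / fact j))" for z
    unfolding e_def stab_poly_minus_exp[OF assms(1)] split[of z, unfolded e_def] by simp
  ultimately show ?thesis
    by (simp only: sum_in_bigo)
qed

lemma exp_neg_stab_poly_expansion:
  fixes c :: "nat \<Rightarrow> real"
  assumes "q \<le> p"
  defines "e \<equiv> \<lambda>j. complex_of_real (error_const c p j)"
  shows "(\<lambda>z. exp (- z) * stab_poly c p q z - 1
            - (e (q+1) * z ^ (q+1) + (e (q+2) - e (q+1)) * z ^ (q+2))) \<in> O[at 0](\<lambda>z. z ^ (q+3))"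
proof -
  define A where "A z = e (q+1) * z ^ (q+1) + e (q+2) * z ^ (q+2)" for z :: complex
  define G where "G z = stab_poly c p q z - exp z - A z" for z
  define H where "H z = exp (- z) - (1 - z)" for z :: complex
  have G: "G \<in> O[at 0](\<lambda>z. z ^ (q+3))"
    unfolding G_def A_def e_def using stab_poly_minus_exp_bigo[OF assms(1)] by simp
  have H: "H \<in> O[at 0](\<lambda>z. z ^ 2)"
  proof (rule bigoI[of _ "exp 1"], rule eventually_mono[OF eventually_norm_less_1_at_0])
    fix z :: complex assume "norm z < 1"
    then show "norm (H z) \<le> exp 1 * norm (z ^ 2)"
      using norm_exp_taylor_remainder_le[of "- z" 1] by (simp add: H_def norm_mult power2_eq_square)
  qed
  have A: "A \<in> O[at 0](\<lambda>z. z ^ (q+1))"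
    unfolding A_def using power_bigo_power_at_0[of "q+1" "q+2", where 'a=complex]
    by (intro sum_in_bigo) auto
  have exp_neg: "(\<lambda>z::complex. exp (- z)) \<in> O[at 0](\<lambda>_. 1)"
  proof (rule bigoI[of _ "exp 1"], rule eventually_mono[OF eventually_norm_less_1_at_0])
    fix z :: complex assume "norm z < 1"
    then show "norm (exp (- z)) \<le> exp 1 * norm (1::complex)"
      using norm_exp[of "- z"] by simp
  qed
  have "(\<lambda>z. H z * A z) \<in> O[at 0](\<lambda>z. z ^ 2 * z ^ (q+1))"
    using H A by (rule landau_o.big.mult)
  moreover have "z ^ 2 * z ^ (q+1) = z ^ (q+3)" for z :: complex
    by (simp add: power_add power2_eq_square numeral_eq_Suc)
  ultimately have HA: "(\<lambda>z. H z * A z) \<in> O[at 0](\<lambda>z. z ^ (q+3))"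
    by simp
  have "exp (- z) * stab_poly c p q z - 1 - (e (q+1) * z ^ (q+1) + (e (q+2) - e (q+1)) * z ^ (q+2))
      = - e (q+2) * z ^ (q+3) + H z * A z + G z * exp (- z)" for z
  proof -
    have "exp (- z) * exp z = 1" by (simp add: exp_minus)
    moreover have "z ^ (q+2) = z ^ (q+1) * z" and "z ^ (q+3) = z ^ (q+1) * z * z"
      by (simp_all add: power_add numeral_eq_Suc)
    ultimately show ?thesis
      unfolding G_def H_def A_def by (simp only:) (simp add: algebra_simps)
  qed
  moreover have "(\<lambda>z. - e (q+2) * z ^ (q+3) + H z * A z + G z * exp (- z)) \<in> O[at 0](\<lambda>z. z ^ (q+3))"
    using HA landau_o.big_1_mult[OF G exp_neg] by (intro sum_in_bigo) auto
  ultimately show ?thesis by simp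
qed

lemma filterlim_imaginary_axis_at_0: "filterlim (\<lambda>x. - \<i> * complex_of_real x) (at 0) (at_right 0)"
proof (rule filterlim_atI)
  show "((\<lambda>x. - \<i> * complex_of_real x) \<longlongrightarrow> 0) (at_right 0)"
    by (auto intro!: tendsto_eq_intros)
  show "eventually (\<lambda>x. - \<i> * complex_of_real x \<noteq> 0) (at_right 0)"
    using eventually_at_right_less[of 0] by eventually_elim simp
qed

lemma bigo_imaginary_axis:
  assumes "f \<in> O[at 0](\<lambda>z. z ^ n)"
  shows "(\<lambda>x. norm (f (- \<i> * complex_of_real x))) \<in> O[at_right 0](\<lambda>x. x ^ n)"
proof -
  have "(\<lambda>x. f (- \<i> * complex_of_real x)) \<in> O[at_right 0](\<lambda>x. (- \<i> * complex_of_real x) ^ n)"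
    using assms filterlim_imaginary_axis_at_0 by (rule landau_o.big.compose)
  then have "(\<lambda>x. norm (f (- \<i> * complex_of_real x))) \<in> O[at_right 0](\<lambda>x. \<bar>x ^ n\<bar>)"
    by (subst (asm) landau_o.big.norm_iff[symmetric]) (simp add: norm_mult norm_power power_abs)
  then show ?thesis by simp
qed

lemma cmod_one_plus_squared: "cmod (1 + u) ^ 2 = 1 + 2 * Re u + cmod u ^ 2"
  unfolding cmod_power2 by (simp add: power2_eq_square algebra_simps)

lemma Re_leading_terms_imaginary_axis:
  fixes a b x :: real
  shows "Re (of_real a * (- \<i> * of_real x) ^ (q+1) + of_real b * (- \<i> * of_real x) ^ (q+2))
       = (if even q then (-1) ^ (q div 2 + 1) * b * x ^ (q+2) else (-1) ^ ((q+1) div 2) * a * x ^ (q+1))"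
proof -
  have pow: "(- \<i> * complex_of_real x) ^ k = (- \<i>) ^ k * complex_of_real (x ^ k)" for k
    by (simp only: power_mult_distrib of_real_power)
  have even_pow: "(- \<i>) ^ (2 * n) = (-1) ^ n" for n :: nat
    by (simp add: power_mult)
  show ?thesis
  proof (cases "even q")
    case True
    then obtain n where "q = 2 * n" by blast
    then have "q + 1 = 2 * n + 1" "q + 2 = 2 * (n + 1)" "q div 2 = n" by simp_all
    then show ?thesis using True by (simp only: pow even_pow) simp
  next
    case False
    then obtain n where "q = 2 * n + 1" using oddE by blast
    then have "q + 1 = 2 * (n + 1)" "q + 2 = 2 * (n + 1) + 1" "(q + 1) div 2 = n + 1" by simp_all
    then show ?thesis using False by (simp only: pow even_pow) simp
  qed
qed

lemma Sval_eq_error_const: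
  "Sval c p q = (if even q then (-1) ^ (q div 2 + 1) * (error_const c p (q+2) - error_const c p (q+1))
                 else (-1) ^ ((q+1) div 2) * error_const c p (q+1))"
  by (simp add: Sval_def error_const_def algebra_simps)

lemma cmod_rfun_squared_expansion:
  fixes c :: "nat \<Rightarrow> real"
  assumes "1 \<le> q" "q \<le> p"
  defines "m \<equiv> if even q then q + 2 else q + 1"
  shows "(\<lambda>x. cmod (rfun c p q x) ^ 2 - 1 - 2 * Sval c p q * x ^ m)
           \<in> O[at_right 0](\<lambda>x. x ^ (q+3))"
proof -
  define e where "e j = complex_of_real (error_const c p j)" for j
  define \<Phi> where "\<Phi> z = exp (- z) * stab_poly c p q z - 1" for z
  define M where "M z = e (q+1) * z ^ (q+1) + (e (q+2) - e (q+1)) * z ^ (q+2)" for z :: complex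
  define w where "w x = - \<i> * complex_of_real x" for x
  have \<Phi>M: "(\<lambda>z. \<Phi> z - M z) \<in> O[at 0](\<lambda>z. z ^ (q+3))"
    using exp_neg_stab_poly_expansion[OF assms(2), of c] by (simp add: \<Phi>_def M_def e_def)
  have M: "M \<in> O[at 0](\<lambda>z. z ^ (q+1))"
    unfolding M_def using power_bigo_power_at_0[of "q+1" "q+2", where 'a=complex]
    by (intro sum_in_bigo) auto
  have \<Phi>: "\<Phi> \<in> O[at 0](\<lambda>z. z ^ (q+1))"
    using sum_in_bigo(1)[OF landau_o.big_trans[OF \<Phi>M power_bigo_power_at_0[of "q+1" "q+3"]] M]
    by simp
  have expansion: "cmod (rfun c p q x) ^ 2 - 1 - 2 * Sval c p q * x ^ m
      = 2 * Re (\<Phi> (w x) - M (w x)) + cmod (\<Phi> (w x)) ^ 2" for x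
  proof -
    have "cmod (rfun c p q x) = cmod (1 + \<Phi> (w x))"
      by (simp add: rfun_eq_stab_poly \<Phi>_def w_def norm_mult norm_exp_eq_Re)
    moreover have "Re (M (w x)) = Sval c p q * x ^ m"
      using Re_leading_terms_imaginary_axis[of "error_const c p (q+1)" x q
          "error_const c p (q+2) - error_const c p (q+1)"]
      by (simp add: M_def w_def e_def m_def Sval_eq_error_const)
    ultimately show ?thesis
      by (simp add: cmod_one_plus_squared)
  qed
  have "(\<lambda>x. Re (\<Phi> (w x) - M (w x))) \<in> O[at_right 0](\<lambda>x. cmod (\<Phi> (w x) - M (w x)))"
    by (intro landau_o.big_mono always_eventually allI)
       (metis abs_Re_le_cmod minus_complex.sel(1) real_norm_def abs_norm_cancel)
  moreover have "(\<lambda>x. cmod (\<Phi> (w x) - M (w x))) \<in> O[at_right 0](\<lambda>x. x ^ (q+3))"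
    unfolding w_def by (rule bigo_imaginary_axis[OF \<Phi>M])
  ultimately have "(\<lambda>x. Re (\<Phi> (w x) - M (w x))) \<in> O[at_right 0](\<lambda>x. x ^ (q+3))"
    by (rule landau_o.big_trans)
  then have Re_part: "(\<lambda>x. 2 * Re (\<Phi> (w x) - M (w x))) \<in> O[at_right 0](\<lambda>x. x ^ (q+3))"
    by (subst landau_o.big.cmult_in_iff) simp_all
  have "(\<lambda>x. cmod (\<Phi> (w x)) * cmod (\<Phi> (w x))) \<in> O[at_right 0](\<lambda>x. x ^ (q+1) * x ^ (q+1))"
    using bigo_imaginary_axis[OF \<Phi>] unfolding w_def by (intro landau_o.big.mult)
  moreover have "(\<lambda>x::real. x ^ (q+1) * x ^ (q+1)) \<in> O[at_right 0](\<lambda>x. x ^ (q+3))"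
    using landau_o.big.filter_mono[OF at_le[OF subset_UNIV]
        power_bigo_power_at_0[of "q+3" "(q+1) + (q+1)", where 'a=real]] assms(1)
    unfolding power_add[of _ "q+1" "q+1", symmetric] by simp
  ultimately have square_part: "(\<lambda>x. cmod (\<Phi> (w x)) ^ 2) \<in> O[at_right 0](\<lambda>x. x ^ (q+3))"
    unfolding power2_eq_square by (rule landau_o.big_trans)
  show ?thesis
    unfolding expansion using Re_part square_part by (rule sum_in_bigo)
qed

lemma eventually_sgn_cmod_rfun_minus_1:
  fixes c :: "nat \<Rightarrow> real"
  assumes "1 \<le> q" "q \<le> p" "Sval c p q \<noteq> 0"
  shows "eventually (\<lambda>x. sgn (cmod (rfun c p q x) - 1) = sgn (Sval c p q)) (at_right 0)"
proof -
  define m where "m = (if even q then q + 2 else q + 1)"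
  define S where "S = Sval c p q"
  have "m < q + 3" by (simp add: m_def)
  then have "(\<lambda>x::real. x ^ (q+3)) \<in> o[at_right 0](\<lambda>x. x ^ m)"
    by (rule landau_o.small.filter_mono[OF at_le[OF subset_UNIV] power_smallo_power_at_0])
  then have "(\<lambda>x::real. x ^ (q+3)) \<in> o[at_right 0](\<lambda>x. (2 * S) * x ^ m)"
    using assms(3) by (subst landau_o.small.cmult) (simp_all add: S_def)
  with cmod_rfun_squared_expansion[OF assms(1,2), of c, folded S_def m_def]
  have "(\<lambda>x. cmod (rfun c p q x) ^ 2 - 1 - 2 * S * x ^ m) \<in> o[at_right 0](\<lambda>x. 2 * S * x ^ m)"
    by (rule landau_o.big_small_trans)
  then have "(\<lambda>x. cmod (rfun c p q x) ^ 2 - 1) \<sim>[at_right 0] (\<lambda>x. 2 * S * x ^ m)"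
    by (rule smallo_imp_asymp_equiv)
  then have "eventually (\<lambda>x. sgn (cmod (rfun c p q x) ^ 2 - 1) = sgn (2 * S * x ^ m)) (at_right 0)"
    by (rule asymp_equiv_imp_eventually_same_sign)
  then show ?thesis
    using eventually_at_right_less[of "0::real"]
  proof eventually_elim
    case (elim x)
    have "sgn (cmod (rfun c p q x) ^ 2 - 1) = sgn (cmod (rfun c p q x) - 1)"
    proof -
      have "cmod (rfun c p q x) ^ 2 - 1 = (cmod (rfun c p q x) - 1) * (cmod (rfun c p q x) + 1)"
        by (simp add: power2_eq_square algebra_simps)
      moreover have "sgn (cmod (rfun c p q x) + 1) = 1"
        by (simp add: add_nonneg_pos)
      ultimately show ?thesis by (simp only: sgn_mult)
    qed
    moreover have "sgn (2 * S * x ^ m) = sgn S"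
      using elim(2) by (simp add: sgn_mult)
    ultimately show ?case using elim(1) by (simp add: S_def)
  qed
qed

theorem mainTheorem2:
  fixes p q :: nat and c :: "nat \<Rightarrow> real"
  assumes "1 \<le> q" and "q \<le> p"
  shows "(Sval c p q < 0 \<longrightarrow>
            (\<exists>\<eta>>0. \<forall>x::real. 0 < x \<and> x < pi * \<eta> \<longrightarrow> cmod (rfun c p q x) < 1))
       \<and> (Sval c p q > 0 \<longrightarrow>
            (\<exists>\<epsilon>>0. \<forall>x::real. 0 < x \<and> x < \<epsilon> \<longrightarrow> cmod (rfun c p q x) > 1))"
proof (intro conjI impI)
  assume "Sval c p q < 0"
  then obtain b where "b > 0" and b: "\<forall>x>0. x < b \<longrightarrow> cmod (rfun c p q x) < 1"
    using eventually_sgn_cmod_rfun_minus_1[OF assms, of c] unfolding eventually_at_right_field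
    by (force simp: sgn_if split: if_splits)
  then show "\<exists>\<eta>>0. \<forall>x. 0 < x \<and> x < pi * \<eta> \<longrightarrow> cmod (rfun c p q x) < 1"
    by (intro exI[of _ "b / pi"]) auto
next
  assume "Sval c p q > 0"
  then show "\<exists>\<epsilon>>0. \<forall>x. 0 < x \<and> x < \<epsilon> \<longrightarrow> cmod (rfun c p q x) > 1"
    using eventually_sgn_cmod_rfun_minus_1[OF assms, of c] unfolding eventually_at_right_field
    by (force simp: sgn_if split: if_splits)
qed

end
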